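(* For every ordinal $\alpha$: if $(T^*_\alpha,P^*_\alpha)$ is consistent (i.e. $T^{*+}_\alpha\cap T^{*-}_\alpha=\emptyset$ and $P^{*+}_\alpha\cap P^{*-}_\alpha=\emptyset$), then it is sound$^*$, i.e. for every $\mathcal L$-sentence $\varphi$, if either $\#\varphi\in P_0^{*-}$ or $(\mathbb N,T^*_\alpha,P^*_\alpha)\models_{SK}\varphi\vee\neg\varphi$, then $(\mathbb N,T^*_\alpha,P^*_\alpha)\not\models_{SK}\mathscr P(\varphi)$.
   Context: Language. Let $\mathcal L_{\mathbb N}$ be the language of first-order Peano arithmetic and $\mathcal L=\mathcal L_{\mathbb N}\cup\{\mathrm T,\mathrm P\}$ with unary predicates $\mathrm T,\mathrm P$. $\mathcal L$-formulas are in Tait style: literals are $s=t$, $s\neq t$, $\mathrm Tt$, $\neg\mathrm Tt$, $\mathrm Pt$, $\neg\mathrm Pt$; formulas are built from literals by $\wedge,\vee,\forall,\exists$; negation of an arbitrary formula is defined by De Morgan dualities with $\neg\neg\varphi:=\varphi$. A standard Gödel numbering is fixed; $\#e$ is the code of $e$, $\ulcorner e\urcorner$ the numeral of $\#e$, $\mathrm{val}(t)$ the value of a closed term $t$, $\dot\neg$ the primitive recursive function with $\dot\neg(\#\varphi)=\#\neg\varphi$; $\mathrm T\varphi,\mathrm P\varphi$ abbreviate $\mathrm T\ulcorner\varphi\urcorner,\mathrm P\ulcorner\varphi\urcorner$. Semantics. A partial model is $(\mathbb N,T,P)$ with $\mathbb N$ the standard model and $T=(T^+,T^-)$, $P=(P^+,P^-)$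 pairs of subsets of $\omega$. Strong Kleene satisfaction $\models_{SK}$: arithmetic literals evaluated in $\mathbb N$; $\mathrm Tt$ satisfied iff $\mathrm{val}(t)\in T^+$, $\neg\mathrm Tt$ iff $\mathrm{val}(t)\in T^-$, likewise for $\mathrm P$ with $P^\pm$; conjunction iff both, disjunction iff at least one, $\forall x\varphi(x)$ iff all numeral instances, $\exists x\varphi(x)$ iff some numeral instance. Base paradoxicality. $\mathrm{PA}[\mathrm{SK}]$ is the two-sided sequent calculus for Strong Kleene logic with identity in $\mathcal L$ (initial sequents $\varphi\Rightarrow\varphi$, cut, weakening, the rule from $\Gamma\Rightarrow\Delta,\varphi$ infer $\neg\varphi,\Gamma\Rightarrow\Delta$, usual rules for $\wedge,\vee,\forall,\exists$, reflexivity $\Rightarrow t=t$, replacement from $\Gamma\Rightarrow\Delta,\varphi(t)$ infer $\Gamma\Rightarrow\Delta,s\neq t,\varphi(s)$) plus the initial sequents of Peano arithmetic and the induction rule for all $\mathcal L$-formulas. A sentence $\varphi$ is base paradoxical iff $\mathrm{PA}[\mathrm{SK}]$ derives $\varphi\Leftrightarrow\neg\mathrm T\varphi$ and $\neg\varphi\Leftrightarrow\mathrm T\varphi$ ($\Leftrightarrow$ meaning both sequents). $B(x)$ is an $\mathcal L_{\mathbb N}$-formula defining in $\mathbb N$ the set of codes of base paradoxical sentences, and $\Pi(x):=B(x)\vee B(\dot\neg x)$. Paradoxicality clauses. Let $\mathscr P(x)$ be the $\mathcal L$-formula which is the disjunction of: (1) $x$ codes a sentence and $\Pi(x)$; (2)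 $x$ codes a sentence $\mathrm Tt$ ($t$ a closed term) and $\mathrm P(\mathrm{val}(t))$; (3) $x$ codes a sentence $\neg\mathrm Tt$ and $\mathrm P(\mathrm{val}(t))$; (4) $x$ codes a sentence $\psi\wedge\theta$ and $(\mathrm P\psi\wedge\mathrm P\theta)\vee(\mathrm T\psi\wedge\mathrm P\theta)\vee(\mathrm T\theta\wedge\mathrm P\psi)$; (5) $x$ codes a sentence $\psi\vee\theta$ and $(\mathrm P\psi\wedge\mathrm P\theta)\vee(\neg\mathrm T\psi\wedge\mathrm P\theta)\vee(\neg\mathrm T\theta\wedge\mathrm P\psi)$; (6) $x$ codes a sentence $\forall v\psi$ and $\exists y\,\mathrm P\psi(\dot y)\wedge\forall y(\mathrm P\psi(\dot y)\vee\mathrm T\psi(\dot y))$; (7) $x$ codes a sentence $\exists v\psi$ and $\exists y\,\mathrm P\psi(\dot y)\wedge\forall y(\mathrm P\psi(\dot y)\vee\neg\mathrm T\psi(\dot y))$; here $\psi(\dot y)$ is the code of the result of substituting the numeral of $y$ for $v$. Write $\mathscr P(\varphi)$ for $\mathscr P(\ulcorner\varphi\urcorner)$. Modified sequence. Let $P_0^{*-}$ be the set of codes of the sentences $\mathrm P\ulcorner\varphi\urcorner$ for $\varphi$ an $\mathcal L$-formula. Define $\Gamma^*_{\mathscr{TP}}(T,P)=\big((\{\#\varphi:(\mathbb N,T,P)\models_{SK}\varphi\},\{\#\varphi:(\mathbb N,T,P)\models_{SK}\neg\varphi\}),(\{\#\varphi:(\mathbb N,T,P)\models_{SK}\mathscr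 P(\varphi)\},\{\#\varphi:(\mathbb N,T,P)\models_{SK}\varphi\vee\neg\varphi\}\cup P_0^{*-})\big)$, $\varphi$ ranging over $\mathcal L$-sentences. Define $(T^*_0,P^*_0)=((\emptyset,\emptyset),(\emptyset,P_0^{*-}))$, $(T^*_{\xi+1},P^*_{\xi+1})=\Gamma^*_{\mathscr{TP}}(T^*_\xi,P^*_\xi)$, and $(T^*_\lambda,P^*_\lambda)=\bigcup_{\xi<\lambda}(T^*_\xi,P^*_\xi)$ (componentwise union) for limit $\lambda$. *)

theory Defs
  imports Main "HOL-Library.Nat_Bijection"
begin

section \<open>Syntax of L = L_N + {T, P} (Tait style, de Bruijn variables)\<close>

text \<open>Terms of the language of PA: variables, 0, successor, +, *.
  Variables are de Bruijn indices: a quantifier binds index 0.\<close>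
datatype trm = Var nat | Zero | S trm | Plus trm trm | Times trm trm

datatype form =
    Eq trm trm | Neq trm trm
  | Tr trm | NTr trm | Pr trm | NPr trm
  | And form form | Or form form
  | All form | Ex form

fun neg :: "form \<Rightarrow> form" where
  "neg (Eq s t) = Neq s t"
| "neg (Neq s t) = Eq s t"
| "neg (Tr t) = NTr t"
| "neg (NTr t) = Tr t"
| "neg (Pr t) = NPr t"
| "neg (NPr t) = Pr t"
| "neg (And a b) = Or (neg a) (neg b)"
| "neg (Or a b) = And (neg a) (neg b)"
| "neg (All a) = Ex (neg a)"
| "neg (Ex a) = All (neg a)"

primrec substt :: "(nat \<Rightarrow> trm) \<Rightarrow> trm \<Rightarrow> trm" where
  "substt \<sigma> (Var n) = \<sigma> n"
| "substt \<sigma> Zero = Zero"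
| "substt \<sigma> (S t) = S (substt \<sigma> t)"
| "substt \<sigma> (Plus s t) = Plus (substt \<sigma> s) (substt \<sigma> t)"
| "substt \<sigma> (Times s t) = Times (substt \<sigma> s) (substt \<sigma> t)"

definition liftt :: "trm \<Rightarrow> trm" where
  "liftt = substt (\<lambda>k. Var (Suc k))"

definition shift :: "(nat \<Rightarrow> trm) \<Rightarrow> nat \<Rightarrow> trm" where
  "shift \<sigma> k = (case k of 0 \<Rightarrow> Var 0 | Suc j \<Rightarrow> liftt (\<sigma> j))"

primrec substf :: "(nat \<Rightarrow> trm) \<Rightarrow> form \<Rightarrow> form" where
  "substf \<sigma> (Eq s t) = Eq (substt \<sigma> s) (substt \<sigma> t)"
| "substf \<sigma> (Neq s t) = Neq (substt \<sigma> s) (substt \<sigma> t)"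
| "substf \<sigma> (Tr t) = Tr (substt \<sigma> t)"
| "substf \<sigma> (NTr t) = NTr (substt \<sigma> t)"
| "substf \<sigma> (Pr t) = Pr (substt \<sigma> t)"
| "substf \<sigma> (NPr t) = NPr (substt \<sigma> t)"
| "substf \<sigma> (And a b) = And (substf \<sigma> a) (substf \<sigma> b)"
| "substf \<sigma> (Or a b) = Or (substf \<sigma> a) (substf \<sigma> b)"
| "substf \<sigma> (All a) = All (substf (shift \<sigma>) a)"
| "substf \<sigma> (Ex a) = Ex (substf (shift \<sigma>) a)"

text \<open>\<open>inst a u\<close> = a(u): the body \<open>a\<close> of a quantifier with its bound variable
  (index 0) replaced by the term \<open>u\<close>.\<close>
definition inst :: "form \<Rightarrow> trm \<Rightarrow> form" where
  "inst a u = substf (\<lambda>k. case k of 0 \<Rightarrow> u | Suc j \<Rightarrow> Var j) a"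

definition liftf :: "form \<Rightarrow> form" where
  "liftf = substf (\<lambda>k. Var (Suc k))"

primrec closedt :: "nat \<Rightarrow> trm \<Rightarrow> bool" where
  "closedt n (Var k) = (k < n)"
| "closedt n Zero = True"
| "closedt n (S t) = closedt n t"
| "closedt n (Plus s t) = (closedt n s \<and> closedt n t)"
| "closedt n (Times s t) = (closedt n s \<and> closedt n t)"

primrec closedf :: "nat \<Rightarrow> form \<Rightarrow> bool" where
  "closedf n (Eq s t) = (closedt n s \<and> closedt n t)"
| "closedf n (Neq s t) = (closedt n s \<and> closedt n t)"
| "closedf n (Tr t) = closedt n t"
| "closedf n (NTr t) = closedt n t"
| "closedf n (Pr t) = closedt n t"
| "closedf n (NPr t) = closedt n t"
| "closedf n (And a b) = (closedf n a \<and> closedf n b)"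
| "closedf n (Or a b) = (closedf n a \<and> closedf n b)"
| "closedf n (All a) = closedf (Suc n) a"
| "closedf n (Ex a) = closedf (Suc n) a"

definition sentence :: "form \<Rightarrow> bool" where
  "sentence a = closedf 0 a"

primrec num :: "nat \<Rightarrow> trm" where
  "num 0 = Zero"
| "num (Suc n) = S (num n)"

primrec val :: "trm \<Rightarrow> nat" where
  "val (Var k) = 0"
| "val Zero = 0"
| "val (S t) = Suc (val t)"
| "val (Plus s t) = val s + val t"
| "val (Times s t) = val s * val t"

primrec codet :: "trm \<Rightarrow> nat" where
  "codet (Var k) = prod_encode (0, k)"
| "codet Zero = prod_encode (1, 0)"
| "codet (S t) = prod_encode (2, codet t)"
| "codet (Plus s t) = prod_encode (3, prod_encode (codet s, codet t))"
| "codet (Times s t) = prod_encode (4, prod_encode (codet s, codet t))"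

primrec code :: "form \<Rightarrow> nat" where
  "code (Eq s t) = prod_encode (0, prod_encode (codet s, codet t))"
| "code (Neq s t) = prod_encode (1, prod_encode (codet s, codet t))"
| "code (Tr t) = prod_encode (2, codet t)"
| "code (NTr t) = prod_encode (3, codet t)"
| "code (Pr t) = prod_encode (4, codet t)"
| "code (NPr t) = prod_encode (5, codet t)"
| "code (And a b) = prod_encode (6, prod_encode (code a, code b))"
| "code (Or a b) = prod_encode (7, prod_encode (code a, code b))"
| "code (All a) = prod_encode (8, code a)"
| "code (Ex a) = prod_encode (9, code a)"

definition quote :: "form \<Rightarrow> trm" where
  "quote a = num (code a)"

section \<open>Strong Kleene semantics over partial models (N, T, P)\<close>

type_synonym pair = "nat set \<times> nat set"   \<comment> \<open>(extension, anti-extension)\<close>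

primrec fsz :: "form \<Rightarrow> nat" where
  "fsz (Eq s t) = 1" | "fsz (Neq s t) = 1" | "fsz (Tr t) = 1" | "fsz (NTr t) = 1"
| "fsz (Pr t) = 1" | "fsz (NPr t) = 1"
| "fsz (And a b) = Suc (fsz a + fsz b)" | "fsz (Or a b) = Suc (fsz a + fsz b)"
| "fsz (All a) = Suc (fsz a)" | "fsz (Ex a) = Suc (fsz a)"

lemma fsz_substf [simp]: "fsz (substf \<sigma> a) = fsz a"
  by (induction a arbitrary: \<sigma>) auto

lemma fsz_inst [simp]: "fsz (inst a u) = fsz a"
  by (simp add: inst_def)

function sat :: "pair \<Rightarrow> pair \<Rightarrow> form \<Rightarrow> bool" where
  "sat T P (Eq s t) = (val s = val t)"
| "sat T P (Neq s t) = (val s \<noteq> val t)"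
| "sat T P (Tr t) = (val t \<in> fst T)"
| "sat T P (NTr t) = (val t \<in> snd T)"
| "sat T P (Pr t) = (val t \<in> fst P)"
| "sat T P (NPr t) = (val t \<in> snd P)"
| "sat T P (And a b) = (sat T P a \<and> sat T P b)"
| "sat T P (Or a b) = (sat T P a \<or> sat T P b)"
| "sat T P (All a) = (\<forall>n. sat T P (inst a (num n)))"
| "sat T P (Ex a) = (\<exists>n. sat T P (inst a (num n)))"
  by pat_completeness auto
termination
  by (relation "measure (\<lambda>(T, P, a). fsz a)") auto

section \<open>The sequent calculus PA[SK]\<close>

text \<open>Sequents are pairs of finite sets of formulas. Eigenvariable conditions are
  realised in de Bruijn style: the context is lifted so that index 0 is fresh.\<close>
inductive deriv :: "form set \<Rightarrow> form set \<Rightarrow> bool" where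
  init: "deriv {a} {a}"
| cut: "deriv G (insert a D) \<Longrightarrow> deriv (insert a G) D \<Longrightarrow> deriv G D"
| weak: "deriv G D \<Longrightarrow> G \<subseteq> G' \<Longrightarrow> D \<subseteq> D' \<Longrightarrow> finite G' \<Longrightarrow> finite D' \<Longrightarrow> deriv G' D'"
| negL: "deriv G (insert a D) \<Longrightarrow> deriv (insert (neg a) G) D"
| andL1: "deriv (insert a G) D \<Longrightarrow> deriv (insert (And a b) G) D"
| andL2: "deriv (insert b G) D \<Longrightarrow> deriv (insert (And a b) G) D"
| andR: "deriv G (insert a D) \<Longrightarrow> deriv G (insert b D) \<Longrightarrow> deriv G (insert (And a b) D)"
| orL: "deriv (insert a G) D \<Longrightarrow> deriv (insert b G) D \<Longrightarrow> deriv (insert (Or a b) G) D"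
| orR1: "deriv G (insert a D) \<Longrightarrow> deriv G (insert (Or a b) D)"
| orR2: "deriv G (insert b D) \<Longrightarrow> deriv G (insert (Or a b) D)"
| allL: "deriv (insert (inst a t) G) D \<Longrightarrow> deriv (insert (All a) G) D"
| allR: "deriv (liftf ` G) (insert a (liftf ` D)) \<Longrightarrow> deriv G (insert (All a) D)"
| exL: "deriv (insert a (liftf ` G)) (liftf ` D) \<Longrightarrow> deriv (insert (Ex a) G) D"
| exR: "deriv G (insert (inst a t) D) \<Longrightarrow> deriv G (insert (Ex a) D)"
| refl: "deriv {} {Eq t t}"
| repl: "deriv G (insert (inst a t) D) \<Longrightarrow> deriv G (insert (Neq s t) (insert (inst a s) D))"
| pa1: "deriv {} {Neq (S t) Zero}"
| pa2: "deriv {Eq (S s) (S t)} {Eq s t}"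
| pa3: "deriv {} {Eq (Plus s Zero) s}"
| pa4: "deriv {} {Eq (Plus s (S t)) (S (Plus s t))}"
| pa5: "deriv {} {Eq (Times s Zero) Zero}"
| pa6: "deriv {} {Eq (Times s (S t)) (Plus (Times s t) s)}"
| ind: "deriv (insert a (liftf ` G))
           (insert (substf (\<lambda>k. if k = 0 then S (Var 0) else Var k) a) (liftf ` D))
        \<Longrightarrow> deriv (insert (inst a Zero) G) (insert (inst a t) D)"

definition base_paradoxical :: "form \<Rightarrow> bool" where
  "base_paradoxical a \<longleftrightarrow> sentence a \<and>
     deriv {a} {neg (Tr (quote a))} \<and> deriv {neg (Tr (quote a))} {a} \<and>
     deriv {neg a} {Tr (quote a)} \<and> deriv {Tr (quote a)} {neg a}"

text \<open>SK-satisfaction of the L-formula \<P>(x) at the number \<open>x\<close>: its arithmetical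
  parts (syntax predicates, B, Pi) are L_N-formulas and are evaluated in N; the
  T/P-atoms are evaluated in the partial model.  Clause (1): Pi(x) = B(x) or B(neg x).\<close>
definition satPar :: "pair \<Rightarrow> pair \<Rightarrow> nat \<Rightarrow> bool" where
  "satPar T P x \<longleftrightarrow>
     (\<exists>a. sentence a \<and> x = code a \<and> (base_paradoxical a \<or> base_paradoxical (neg a)))
   \<or> (\<exists>t. closedt 0 t \<and> x = code (Tr t) \<and> val t \<in> fst P)
   \<or> (\<exists>t. closedt 0 t \<and> x = code (NTr t) \<and> val t \<in> fst P)
   \<or> (\<exists>a b. sentence (And a b) \<and> x = code (And a b) \<and>
        ((code a \<in> fst P \<and> code b \<in> fst P) \<or> (code a \<in> fst T \<and> code b \<in> fst P)
         \<or> (code b \<in> fst T \<and> code a \<in> fst P)))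
   \<or> (\<exists>a b. sentence (Or a b) \<and> x = code (Or a b) \<and>
        ((code a \<in> fst P \<and> code b \<in> fst P) \<or> (code a \<in> snd T \<and> code b \<in> fst P)
         \<or> (code b \<in> snd T \<and> code a \<in> fst P)))
   \<or> (\<exists>a. sentence (All a) \<and> x = code (All a) \<and>
        (\<exists>y. code (inst a (num y)) \<in> fst P) \<and>
        (\<forall>y. code (inst a (num y)) \<in> fst P \<or> code (inst a (num y)) \<in> fst T))
   \<or> (\<exists>a. sentence (Ex a) \<and> x = code (Ex a) \<and>
        (\<exists>y. code (inst a (num y)) \<in> fst P) \<and>
        (\<forall>y. code (inst a (num y)) \<in> fst P \<or> code (inst a (num y)) \<in> snd T))"

section \<open>The modified transfinite sequence\<close>

type_synonym stage = "pair \<times> pair"   \<comment> \<open>(T, P)\<close>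

definition P0minus :: "nat set" where
  "P0minus = {code (Pr (quote a)) | a. True}"

definition Gamma :: "stage \<Rightarrow> stage" where
  "Gamma TP = (let T = fst TP; P = snd TP in
     (({code a | a. sentence a \<and> sat T P a},
       {code a | a. sentence a \<and> sat T P (neg a)}),
      ({code a | a. sentence a \<and> satPar T P (code a)},
       {code a | a. sentence a \<and> sat T P (Or a (neg a))} \<union> P0minus)))"

definition stage0 :: stage where
  "stage0 = (({}, {}), ({}, P0minus))"

definition unionS :: "stage set \<Rightarrow> stage" where
  "unionS X = (((\<Union>x\<in>X. fst (fst x)), (\<Union>x\<in>X. snd (fst x))),
               ((\<Union>x\<in>X. fst (snd x)), (\<Union>x\<in>X. snd (snd x))))"

text \<open>Ordinals are represented by elements of well-ordered types; one step of the
  recursion distinguishes zero, successor and limit elements.\<close>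
definition stage_step :: "('a::wellorder \<Rightarrow> stage) \<Rightarrow> 'a \<Rightarrow> stage" where
  "stage_step f x =
     (if \<forall>y. \<not> y < x then stage0
      else if \<exists>y. y < x \<and> (\<forall>z. \<not> (y < z \<and> z < x))
      then Gamma (f (THE y. y < x \<and> (\<forall>z. \<not> (y < z \<and> z < x))))
      else unionS (f ` {y. y < x}))"

definition stage :: "'a::wellorder \<Rightarrow> stage" where
  "stage = wfrec {(y, x). y < x} stage_step"

lemma stage_unfold: "stage x = stage_step stage x"
proof -
  have wf: "wf {(y, x). y < (x::'a)}" using wf by (simp add: wf_def)
  have "stage x = stage_step (cut stage {(y, x). y < x} x) x"
    unfolding stage_def by (rule wfrec[OF wf])
  also have "\<dots> = stage_step stage x"
  proof -
    have eq: "\<And>y. y < x \<Longrightarrow> cut stage {(y, x). y < x} x y = stage y"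
      by (simp add: cut_def)
    have the: "(THE y. y < x \<and> (\<forall>z. \<not> (y < z \<and> z < x))) < x"
      if ex: "\<exists>y. y < x \<and> (\<forall>z. \<not> (y < z \<and> z < x))"
    proof -
      from ex obtain y where y: "y < x \<and> (\<forall>z. \<not> (y < z \<and> z < x))" by blast
      have u: "w = y" if w: "w < x \<and> (\<forall>z. \<not> (w < z \<and> z < x))" for w
      proof (rule ccontr)
        assume "w \<noteq> y"
        then have "w < y \<or> y < w" by (rule neq_iff[THEN iffD1])
        then show False using w y by blast
      qed
      have "(THE y. y < x \<and> (\<forall>z. \<not> (y < z \<and> z < x))) = y"
        by (rule the_equality) (use y u in blast)+
      then show ?thesis using y by simp
    qed
    have img: "cut stage {(y, x). y < x} x ` {y. y < x} = stage ` {y. y < x}"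
      using eq by (auto intro: image_cong)
    show ?thesis
      unfolding stage_step_def
      apply (simp only: img)
      apply (cases "\<exists>y. y < x \<and> (\<forall>z. \<not> (y < z \<and> z < x))")
       apply (simp only: eq[OF the] if_True)
      apply (simp only: if_False)
      done
  qed
  finally show ?thesis .
qed

definition consistent :: "stage \<Rightarrow> bool" where
  "consistent TP \<longleftrightarrow> fst (fst TP) \<inter> snd (fst TP) = {} \<and> fst (snd TP) \<inter> snd (snd TP) = {}"

definition sound_star :: "stage \<Rightarrow> bool" where
  "sound_star TP \<longleftrightarrow> (\<forall>a. sentence a \<longrightarrow>
      (code a \<in> P0minus \<or> sat (fst TP) (snd TP) (Or a (neg a))) \<longrightarrow>
      \<not> satPar (fst TP) (snd TP) (code a))"

end

theory Submission
  imports Defs "HOL-Library.Product_Order"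
begin

(* The stages increase, whatever enters T^+ (T^-) at some stage was true (false) at an
   earlier stage and hence stays true (false), and T^+ \<union> T^- \<subseteq> P^-.  At a consistent
   stage \<alpha> this makes every sentence declared paradoxical at a stage \<gamma> \<le> \<alpha> a gap at \<alpha>
   (neither it nor its negation holds), by induction on complexity: base paradoxical
   sentences are gaps by soundness of PA[SK] in consistent strong Kleene models; an atom
   Tt or \<not>Tt with val t in P^+ is a gap since P^+ is disjoint from P^-; and the remaining
   clauses are exactly the strong Kleene conditions for a compound to be a gap, once the
   constituents placed in P^+ are known to be gaps (they were declared paradoxical
   earlier) and those in T^+ (T^-) to be true (false).  A gap refutes \<phi> \<or> \<not>\<phi>.  The
   sentences P\<phi> of P_0^{*-} satisfy no clause at all: they are not base paradoxical,
   as PA[SK] is sound in models with empty T in which P\<phi> (or \<not>P\<phi>) holds. *)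

abbreviation holds :: "stage \<Rightarrow> form \<Rightarrow> bool" where
  "holds X a \<equiv> sat (fst X) (snd X) a"

definition gap :: "stage \<Rightarrow> form \<Rightarrow> bool" where
  "gap X a \<longleftrightarrow> \<not> holds X a \<and> \<not> holds X (neg a)"

abbreviation paradoxical :: "stage \<Rightarrow> nat \<Rightarrow> bool" where
  "paradoxical X n \<equiv> satPar (fst X) (snd X) n"

abbreviation Tpos :: "stage \<Rightarrow> nat set" where "Tpos X \<equiv> fst (fst X)"
abbreviation Tneg :: "stage \<Rightarrow> nat set" where "Tneg X \<equiv> snd (fst X)"
abbreviation Ppos :: "stage \<Rightarrow> nat set" where "Ppos X \<equiv> fst (snd X)"
abbreviation Pneg :: "stage \<Rightarrow> nat set" where "Pneg X \<equiv> snd (snd X)"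

lemma codet_eq_iff: "codet s = codet t \<longleftrightarrow> s = t"
  by (induction s arbitrary: t; case_tac t; auto)

lemma code_eq_iff: "code a = code b \<longleftrightarrow> a = b"
  by (induction a arbitrary: b; case_tac b; auto simp: codet_eq_iff)

lemma neg_neg [simp]: "neg (neg a) = a"
  by (induction a) auto

lemma neg_substf: "neg (substf \<sigma> a) = substf \<sigma> (neg a)"
  by (induction a arbitrary: \<sigma>) auto

lemma neg_inst: "neg (inst a u) = inst (neg a) u"
  by (simp add: inst_def neg_substf)

lemma val_num [simp]: "val (num n) = n"
  by (induction n) auto

section \<open>Soundness of PA[SK] in consistent models\<close>

(* The quantifier and induction rules pass through open formulas, which sat does not
   interpret, so soundness is proved for satisfaction under variable assignments. *)

primrec evalt :: "(nat \<Rightarrow> nat) \<Rightarrow> trm \<Rightarrow> nat" where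
  "evalt e (Var k) = e k"
| "evalt e Zero = 0"
| "evalt e (S t) = Suc (evalt e t)"
| "evalt e (Plus s t) = evalt e s + evalt e t"
| "evalt e (Times s t) = evalt e s * evalt e t"

primrec satv :: "pair \<Rightarrow> pair \<Rightarrow> (nat \<Rightarrow> nat) \<Rightarrow> form \<Rightarrow> bool" where
  "satv T P e (Eq s t) = (evalt e s = evalt e t)"
| "satv T P e (Neq s t) = (evalt e s \<noteq> evalt e t)"
| "satv T P e (Tr t) = (evalt e t \<in> fst T)"
| "satv T P e (NTr t) = (evalt e t \<in> snd T)"
| "satv T P e (Pr t) = (evalt e t \<in> fst P)"
| "satv T P e (NPr t) = (evalt e t \<in> snd P)"
| "satv T P e (And a b) = (satv T P e a \<and> satv T P e b)"
| "satv T P e (Or a b) = (satv T P e a \<or> satv T P e b)"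
| "satv T P e (All a) = (\<forall>n. satv T P (case_nat n e) a)"
| "satv T P e (Ex a) = (\<exists>n. satv T P (case_nat n e) a)"

lemma evalt_substt: "evalt e (substt \<sigma> t) = evalt (\<lambda>k. evalt e (\<sigma> k)) t"
  by (induction t) auto

lemma evalt_num [simp]: "evalt e (num n) = n"
  by (induction n) auto

lemma evalt_zero_env: "evalt (\<lambda>_. 0) t = val t"
  by (induction t) auto

lemma evalt_shift: "(\<lambda>k. evalt (case_nat n e) (shift \<sigma> k)) = case_nat n (\<lambda>k. evalt e (\<sigma> k))"
  by (rule ext, case_tac k) (simp_all add: shift_def liftt_def evalt_substt)

lemma satv_substf: "satv T P e (substf \<sigma> a) = satv T P (\<lambda>k. evalt e (\<sigma> k)) a"
  by (induction a arbitrary: e \<sigma>) (auto simp: evalt_substt evalt_shift)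

lemma satv_inst: "satv T P e (inst a t) = satv T P (case_nat (evalt e t) e) a"
proof -
  have "(\<lambda>k. evalt e (case k of 0 \<Rightarrow> t | Suc j \<Rightarrow> Var j)) = case_nat (evalt e t) e"
    by (rule ext, case_tac k) auto
  then show ?thesis by (simp add: inst_def satv_substf)
qed

lemma satv_liftf: "satv T P (case_nat n e) (liftf a) = satv T P e a"
  by (simp add: liftf_def satv_substf)

lemma satv_succ_substf:
  "satv T P (case_nat n e) (substf (\<lambda>k. if k = 0 then S (Var 0) else Var k) a)
   = satv T P (case_nat (Suc n) e) a"
proof -
  have "(\<lambda>k. evalt (case_nat n e) (if k = 0 then S (Var 0) else Var k)) = case_nat (Suc n) e"
    by (rule ext, case_tac k) auto
  then show ?thesis by (simp add: satv_substf)
qed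

lemma sat_eq_satv: "sat T P a = satv T P (\<lambda>_. 0) a"
proof (induction T P a rule: sat.induct)
  case (9 T P a)
  then show ?case by (simp add: satv_inst)
next
  case (10 T P a)
  then show ?case by (simp add: satv_inst)
qed (auto simp: evalt_zero_env)

lemma satv_not_glut:
  "consistent (T, P) \<Longrightarrow> satv T P e a \<Longrightarrow> \<not> satv T P e (neg a)"
  unfolding consistent_def by (induction a arbitrary: e) auto

lemma deriv_sound:
  assumes "deriv G D" and "consistent (T, P)" and "\<forall>g\<in>G. satv T P e g"
  shows "\<exists>d\<in>D. satv T P e d"
  using assms(1,3)
proof (induction arbitrary: e rule: deriv.induct)
  case (negL G a D)
  then show ?case using satv_not_glut[OF assms(2)] by fastforce
next
  case (allR G a D)
  show ?case
  proof (cases "\<exists>d\<in>D. satv T P e d")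
    case False
    have "satv T P (case_nat n e) a" for n
      using allR.IH[of "case_nat n e"] allR.prems False by (auto simp: satv_liftf)
    then show ?thesis by simp
  qed auto
next
  case (exL a G D)
  then obtain n where "satv T P (case_nat n e) a" by auto
  then show ?case using exL.IH[of "case_nat n e"] exL.prems by (auto simp: satv_liftf)
next
  case (ind a G D t)
  show ?case
  proof (cases "\<exists>d\<in>D. satv T P e d")
    case False
    have "satv T P (case_nat n e) a" for n
    proof (induction n)
      case 0
      then show ?case using ind.prems by (simp add: satv_inst)
    next
      case (Suc n)
      then show ?case using ind.IH[of "case_nat n e"] ind.prems False
        by (auto simp: satv_liftf satv_succ_substf)
    qed
    then show ?thesis by (simp add: satv_inst)
  qed auto
qed (force simp: satv_inst)+

lemma deriv_sound_sat:
  "deriv {a} {b} \<Longrightarrow> consistent (T, P) \<Longrightarrow> sat T P a \<Longrightarrow> sat T P b"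
  using deriv_sound[of "{a}" "{b}" T P "\<lambda>_. 0"] by (simp add: sat_eq_satv)

lemma holds_not_glut: "consistent X \<Longrightarrow> holds X a \<Longrightarrow> \<not> holds X (neg a)"
  using satv_not_glut[of "fst X" "snd X"] by (simp add: sat_eq_satv)

section \<open>Strong Kleene gaps\<close>

lemma gap_neg [simp]: "gap X (neg a) \<longleftrightarrow> gap X a"
  by (auto simp: gap_def)

lemma gap_And:
  assumes "consistent X"
    and "gap X a \<and> gap X b \<or> holds X a \<and> gap X b \<or> holds X b \<and> gap X a"
  shows "gap X (And a b)"
  using assms holds_not_glut[OF assms(1)] unfolding gap_def by auto

lemma gap_Or:
  assumes "consistent X"
    and "gap X a \<and> gap X b \<or> holds X (neg a) \<and> gap X b \<or> holds X (neg b) \<and> gap X a"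
  shows "gap X (Or a b)"
  using assms holds_not_glut[OF assms(1)] unfolding gap_def by fastforce

lemma gap_All:
  assumes "consistent X" and "\<exists>n. gap X (inst a (num n))"
    and "\<forall>n. gap X (inst a (num n)) \<or> holds X (inst a (num n))"
  shows "gap X (All a)"
  using assms holds_not_glut[OF assms(1)] unfolding gap_def by (auto simp: neg_inst[symmetric])

lemma gap_Ex:
  assumes "consistent X" and "\<exists>n. gap X (inst a (num n))"
    and "\<forall>n. gap X (inst a (num n)) \<or> holds X (neg (inst a (num n)))"
  shows "gap X (Ex a)"
  using assms holds_not_glut[OF assms(1)] unfolding gap_def by (auto simp: neg_inst[symmetric])

lemma gap_Tr_NTr:
  assumes "consistent X" and "Tpos X \<union> Tneg X \<subseteq> Pneg X" and "val t \<in> Ppos X"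
  shows "gap X (Tr t)" and "gap X (NTr t)"
  using assms unfolding consistent_def gap_def by auto

lemma base_paradoxical_gap:
  assumes "consistent X" and "base_paradoxical c"
    and Tpos_true: "\<And>a. code a \<in> Tpos X \<Longrightarrow> holds X a"
    and Tneg_false: "\<And>a. code a \<in> Tneg X \<Longrightarrow> holds X (neg a)"
  shows "gap X c"
proof -
  have cons: "consistent (fst X, snd X)" using assms(1) by simp
  have der: "deriv {c} {neg (Tr (quote c))}" "deriv {neg c} {Tr (quote c)}"
    using assms(2) unfolding base_paradoxical_def by auto
  show ?thesis
    unfolding gap_def
  proof (intro conjI notI)
    assume c: "holds X c"
    then have "code c \<in> Tneg X" using deriv_sound_sat[OF der(1) cons] by (simp add: quote_def)
    then show False using Tneg_false holds_not_glut[OF assms(1) c] by blast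
  next
    assume c: "holds X (neg c)"
    then have "code c \<in> Tpos X" using deriv_sound_sat[OF der(2) cons] by (simp add: quote_def)
    then show False using Tpos_true holds_not_glut[OF assms(1)] c by blast
  qed
qed

lemma base_paradoxical_unsat_empty_T:
  "base_paradoxical a \<Longrightarrow> fst P \<inter> snd P = {} \<Longrightarrow> \<not> sat ({}, {}) P a"
  using deriv_sound_sat[of a "neg (Tr (quote a))" "({}, {})" P]
  by (auto simp: base_paradoxical_def consistent_def)

lemma not_base_paradoxical_Pr: "\<not> base_paradoxical (Pr t)"
  using base_paradoxical_unsat_empty_T[of "Pr t" "({val t}, {})"] by auto

lemma not_base_paradoxical_NPr: "\<not> base_paradoxical (NPr t)"
  using base_paradoxical_unsat_empty_T[of "NPr t" "({}, {val t})"] by auto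

lemma P0minus_not_paradoxical: "n \<in> P0minus \<Longrightarrow> \<not> satPar T P n"
  unfolding P0minus_def satPar_def
  by (auto simp del: code.simps simp: code_eq_iff not_base_paradoxical_Pr not_base_paradoxical_NPr)

section \<open>Monotonicity\<close>

lemma sat_mono: "sat T P a \<Longrightarrow> T \<le> T' \<Longrightarrow> P \<le> P' \<Longrightarrow> sat T' P' a"
  by (induction T P a rule: sat.induct) (auto simp: less_eq_prod_def)

lemma holds_mono: "X \<le> Y \<Longrightarrow> holds X a \<Longrightarrow> holds Y a"
  by (auto simp: less_eq_prod_def intro: sat_mono)

lemma satPar_mono: "satPar T P n \<Longrightarrow> T \<le> T' \<Longrightarrow> P \<le> P' \<Longrightarrow> satPar T' P' n"
  unfolding satPar_def less_eq_prod_def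
  by (erule rev_mp, intro disj_mono conj_mono ex_mono all_mono imp_refl; blast)

lemma mono_Gamma: "mono Gamma"
proof
  fix X Y :: stage
  assume "X \<le> Y"
  then have "holds X a \<Longrightarrow> holds Y a" "paradoxical X n \<Longrightarrow> paradoxical Y n" for a n
    by (auto simp: less_eq_prod_def intro: holds_mono satPar_mono)
  then show "Gamma X \<le> Gamma Y"
    unfolding Gamma_def Let_def less_eq_prod_def by (simp add: Collect_mono_iff; blast)
qed

lemma unionS_eq_Sup: "unionS X = Sup X"
  by (simp add: unionS_def Sup_prod_def image_image)

lemma stage_zero: "\<forall>y. \<not> y < x \<Longrightarrow> stage x = stage0"
  by (subst stage_unfold) (simp add: stage_step_def)

lemma stage_succ:
  assumes "y < x" and "\<forall>z. \<not> (y < z \<and> z < x)"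
  shows "stage x = Gamma (stage y)"
proof -
  have "(THE y. y < x \<and> (\<forall>z. \<not> (y < z \<and> z < x))) = y"
    by (rule the_equality) (use assms in \<open>auto intro: linorder_neqE\<close>)
  then show ?thesis
    using assms by (subst stage_unfold) (auto simp: stage_step_def)
qed

lemma stage_limit:
  assumes "y < x" and "\<forall>y<x. \<exists>z. y < z \<and> z < x"
  shows "stage x = Sup (stage ` {..<x})"
  using assms by (subst stage_unfold) (auto simp: stage_step_def unionS_eq_Sup lessThan_def)

lemma stage_cases:
  fixes x :: "'a::wellorder"
  obtains (zero) "\<forall>y. \<not> y < x"
  | (succ) y where "y < x" and "\<forall>z. \<not> (y < z \<and> z < x)"
  | (limit) y where "y < x" and "\<forall>y<x. \<exists>z. y < z \<and> z < x"
  by blast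

lemma stage_Gamma_bounds:
  fixes x :: "'a::wellorder"
  shows "stage x \<le> Gamma (stage x) \<and> (\<forall>y<x. Gamma (stage y) \<le> stage x)"
proof (induction x rule: less_induct)
  case (less x)
  show ?case
  proof (cases x rule: stage_cases)
    case zero
    then show ?thesis by (simp add: stage_zero stage0_def Gamma_def Let_def less_eq_prod_def)
  next
    case (succ z)
    have "Gamma (stage y) \<le> Gamma (stage z)" if "y < x" for y
      using less.IH[OF succ(1)] succ(2) that
      by (metis dual_order.refl linorder_neqE order_trans)
    moreover have "Gamma (stage z) \<le> Gamma (Gamma (stage z))"
      using less.IH[OF succ(1)] mono_Gamma by (auto dest: monoD)
    ultimately show ?thesis by (simp add: stage_succ[OF succ])
  next
    case (limit w)
    have below: "stage y \<le> stage x" if "y < x" for y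
      by (simp add: stage_limit[OF limit] Sup_upper that)
    have "Gamma (stage y) \<le> stage x" if "y < x" for y
    proof -
      obtain v where "y < v" and "v < x" using limit(2) \<open>y < x\<close> by blast
      then show ?thesis using less.IH[of v] below order_trans by blast
    qed
    moreover have "stage x \<le> Gamma (stage x)"
    proof -
      have "stage y \<le> Gamma (stage x)" if "y < x" for y
        using less.IH[OF that] below[OF that] mono_Gamma
        by (meson monoD order_trans)
      then show ?thesis unfolding stage_limit[OF limit] by (auto intro: Sup_least)
    qed
    ultimately show ?thesis by blast
  qed
qed

lemma stage_le_Gamma: "stage x \<le> Gamma (stage x)"
  using stage_Gamma_bounds by blast

lemma Gamma_stage_le: "y < x \<Longrightarrow> Gamma (stage y) \<le> stage x"
  using stage_Gamma_bounds by blast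

lemma mono_stage: "mono (stage :: 'a::wellorder \<Rightarrow> stage)"
proof
  fix y x :: 'a
  assume "y \<le> x"
  then show "stage y \<le> stage x"
    using stage_le_Gamma[of y] Gamma_stage_le[of y x] by (cases "y = x") (auto intro: order_trans)
qed

lemma stage_le_Sup_Gamma:
  fixes x :: "'a::wellorder"
  shows "stage x \<le> sup stage0 (SUP y\<in>{..<x}. Gamma (stage y))"
proof (induction x rule: less_induct)
  case (less x)
  show ?case
  proof (cases x rule: stage_cases)
    case zero
    then show ?thesis by (simp add: stage_zero)
  next
    case (succ z)
    have "Gamma (stage z) \<le> (SUP y\<in>{..<x}. Gamma (stage y))"
      using succ(1) by (intro SUP_upper) simp
    then show ?thesis by (simp add: stage_succ[OF succ] le_supI2)
  next
    case (limit w)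
    have "stage y \<le> sup stage0 (SUP y\<in>{..<x}. Gamma (stage y))" if "y < x" for y
      using less.IH[OF that] that
      by (meson SUP_subset_mono lessThan_subset_iff less_imp_le order_refl order_trans sup_mono)
    then show ?thesis unfolding stage_limit[OF limit] by (auto intro: Sup_least)
  qed
qed

lemma Tpos_Gamma: "code a \<in> Tpos (Gamma X) \<longleftrightarrow> sentence a \<and> holds X a"
  by (auto simp: Gamma_def Let_def code_eq_iff)

lemma Tneg_Gamma: "code a \<in> Tneg (Gamma X) \<longleftrightarrow> sentence a \<and> holds X (neg a)"
  by (auto simp: Gamma_def Let_def code_eq_iff)

lemma Ppos_Gamma: "code a \<in> Ppos (Gamma X) \<longleftrightarrow> sentence a \<and> paradoxical X (code a)"
  by (auto simp: Gamma_def Let_def code_eq_iff)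

lemma Tpos_Tneg_Gamma_subset_Pneg: "Tpos (Gamma X) \<union> Tneg (Gamma X) \<subseteq> Pneg (Gamma X)"
  by (auto simp: Gamma_def Let_def)

lemma stage_components_from_earlier:
  fixes x :: "'a::wellorder"
  shows "n \<in> Tpos (stage x) \<Longrightarrow> \<exists>y<x. n \<in> Tpos (Gamma (stage y))"
    and "n \<in> Tneg (stage x) \<Longrightarrow> \<exists>y<x. n \<in> Tneg (Gamma (stage y))"
    and "n \<in> Ppos (stage x) \<Longrightarrow> \<exists>y<x. n \<in> Ppos (Gamma (stage y))"
  using stage_le_Sup_Gamma[of x]
  by (auto simp: stage0_def less_eq_prod_def Sup_prod_def image_image)

lemma Tpos_stage_holds: "code a \<in> Tpos (stage x) \<Longrightarrow> holds (stage x) a"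
  by (meson stage_components_from_earlier(1) Tpos_Gamma holds_mono mono_stage
      less_imp_le monoD)

lemma Tneg_stage_holds_neg: "code a \<in> Tneg (stage x) \<Longrightarrow> holds (stage x) (neg a)"
  by (meson stage_components_from_earlier(2) Tneg_Gamma holds_mono mono_stage
      less_imp_le monoD)

lemma Ppos_stage_paradoxical_earlier:
  "code a \<in> Ppos (stage x) \<Longrightarrow> \<exists>y<x. paradoxical (stage y) (code a)"
  using stage_components_from_earlier(3) Ppos_Gamma by blast

lemma Tpos_Tneg_stage_subset_Pneg: "Tpos (stage x) \<union> Tneg (stage x) \<subseteq> Pneg (stage x)"
proof
  fix n
  assume "n \<in> Tpos (stage x) \<union> Tneg (stage x)"
  then obtain y where "y < x" and "n \<in> Tpos (Gamma (stage y)) \<union> Tneg (Gamma (stage y))"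
    using stage_components_from_earlier(1,2) by blast
  then show "n \<in> Pneg (stage x)"
    using Tpos_Tneg_Gamma_subset_Pneg[of "stage y"] Gamma_stage_le[of y x]
    by (auto simp: less_eq_prod_def)
qed

section \<open>Paradoxical sentences are gaps\<close>

lemma paradoxical_stage_gap:
  fixes x :: "'a::wellorder"
  assumes cons: "consistent (stage x)"
  shows "\<gamma> \<le> x \<Longrightarrow> paradoxical (stage \<gamma>) (code c) \<Longrightarrow> gap (stage x) c"
proof (induction c arbitrary: \<gamma> rule: measure_induct_rule[of fsz])
  case (less c)
  have earlier: "stage \<gamma> \<le> stage x"
    using less.prems(1) mono_stage by (auto dest: monoD)
  have Ppos_gap: "gap (stage x) d" if "code d \<in> Ppos (stage \<gamma>)" and "fsz d < fsz c" for d
    using Ppos_stage_paradoxical_earlier[OF that(1)] less.IH[OF that(2)] less.prems(1)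
    by (meson less_imp_le order_trans)
  have Tpos_holds: "holds (stage x) d" if "code d \<in> Tpos (stage \<gamma>)" for d
    using Tpos_stage_holds[OF that] earlier holds_mono by blast
  have Tneg_holds_neg: "holds (stage x) (neg d)" if "code d \<in> Tneg (stage \<gamma>)" for d
    using Tneg_stage_holds_neg[OF that] earlier holds_mono by blast
  have atom_gap: "gap (stage x) (Tr t)" "gap (stage x) (NTr t)" if "val t \<in> Ppos (stage \<gamma>)" for t
    using gap_Tr_NTr[OF cons Tpos_Tneg_stage_subset_Pneg] that earlier
    by (auto simp: less_eq_prod_def)
  have base_gap: "gap (stage x) c" if "base_paradoxical c \<or> base_paradoxical (neg c)"
    using that base_paradoxical_gap[OF cons _ Tpos_stage_holds Tneg_stage_holds_neg]
    by (metis gap_neg)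
  from less.prems(2) show ?case
    unfolding satPar_def code_eq_iff
    by (elim disjE exE conjE; fastforce simp: base_gap atom_gap
        intro!: gap_And gap_Or gap_All gap_Ex cons dest: Ppos_gap Tpos_holds Tneg_holds_neg)
qed

theorem mainTheorem14:
  fixes \<alpha> :: "'a::wellorder"
  assumes "consistent (stage \<alpha>)"
  shows "sound_star (stage \<alpha>)"
  unfolding sound_star_def
proof (intro allI impI notI)
  fix a
  assume "code a \<in> P0minus \<or> holds (stage \<alpha>) (Or a (neg a))"
    and par: "paradoxical (stage \<alpha>) (code a)"
  then have "holds (stage \<alpha>) (Or a (neg a))"
    using P0minus_not_paradoxical by blast
  moreover have "gap (stage \<alpha>) a"
    using paradoxical_stage_gap[OF assms order_refl par] .
  ultimately show False by (simp add: gap_def)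
qed

end
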